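(* Let $L,K,\tau$ be positive integers, $K_{tot}=KL$, and index users by $u=(i,j)$, $i\in\{1,\dots,L\}$, $j\in\{1,\dots,K\}$. Let $\mathbf{q}_u\in\mathbb{R}^\tau$ be unit-norm pilot sequences and $\rho_{uv}=\mathbf{q}_u^T\mathbf{q}_v$. Let $P_u>0$ and $\delta_u>0$ for all users $u$, and define $$\overline{\phi}_u=\frac{P_u}{\delta_u\sum_{v}\rho_{uv}^2P_v/\delta_v-P_u},$$ where the sum is over all $K_{tot}$ users $v$, assuming each denominator is positive. Let $\gamma_u>0$ be SINR requirements such that $\overline{\phi}_u\ge\gamma_u$ for every user $u$. Then $$K_{tot}\le\sqrt{\tau\sum_{i=1}^L\sum_{j=1}^K\frac{1+\gamma_{i_j}}{\gamma_{i_j}}}.$$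
   Context: In the paper, $\overline{\phi}_u$ is the (lower bound on the) asymptotic downlink SINR of user $u$ in a multi-cell massive MIMO network with MRT precoding and least-squares channel estimation as the number of base-station antennas tends to infinity, $P_u$ is the downlink transmit power for user $u$, and $\delta_u$ is the normalization constant of its MRT precoder; $\gamma_{i_j}$ is the SINR requirement of user $j$ in cell $i$. The right-hand side is the paper's upper bound on the user load (number of simultaneously served users whose SINR requirements are met). *)

theory Defs
  imports "HOL-Analysis.Analysis"
begin

definition users :: "nat \<Rightarrow> nat \<Rightarrow> (nat \<times> nat) set" where
  "users L K = {1..L} \<times> {1..K}"

definition rho :: "(nat \<times> nat \<Rightarrow> real ^ 't) \<Rightarrow> nat \<times> nat \<Rightarrow> nat \<times> nat \<Rightarrow> real" where
  "rho q u v = q u \<bullet> q v"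

definition phibar :: "nat \<Rightarrow> nat \<Rightarrow> (nat \<times> nat \<Rightarrow> real ^ 't) \<Rightarrow> (nat \<times> nat \<Rightarrow> real)
    \<Rightarrow> (nat \<times> nat \<Rightarrow> real) \<Rightarrow> nat \<times> nat \<Rightarrow> real" where
  "phibar L K q P \<delta> u =
     P u / (\<delta> u * (\<Sum>v\<in>users L K. (rho q u v)\<^sup>2 * P v / \<delta> v) - P u)"

end

theory Submission
  imports Defs
begin

text \<open>
  Each requirement \<open>\<gamma>\<^sub>u \<le> \<phi>\<^sub>u\<close> rearranges to
  \<open>\<Sum>\<^sub>v \<rho>\<^sub>u\<^sub>v\<^sup>2 w\<^sub>v / w\<^sub>u \<le> (1 + \<gamma>\<^sub>u) / \<gamma>\<^sub>u\<close> with \<open>w\<^sub>v = P\<^sub>v / \<delta>\<^sub>v\<close>.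
  Summing over \<open>u\<close> and symmetrising, \<open>w\<^sub>v / w\<^sub>u + w\<^sub>u / w\<^sub>v \<ge> 2\<close> removes the
  weights, so the right-hand side dominates the frame potential \<open>\<Sum>\<^sub>u\<^sub>v \<rho>\<^sub>u\<^sub>v\<^sup>2\<close>.
  This is the squared Frobenius norm of the \<open>\<tau> \<times> \<tau>\<close> frame operator
  \<open>\<Sum>\<^sub>u q\<^sub>u q\<^sub>u\<^sup>T\<close>, whose trace is \<open>K\<^sub>t\<^sub>o\<^sub>t\<close>; Cauchy-Schwarz on the diagonal gives
  the Welch-type bound \<open>K\<^sub>t\<^sub>o\<^sub>t\<^sup>2 \<le> \<tau> \<Sum>\<^sub>u\<^sub>v \<rho>\<^sub>u\<^sub>v\<^sup>2\<close>.
\<close>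

lemma frame_potential_eq_frobenius:
  fixes q :: "'u \<Rightarrow> real ^ 't"
  shows "(\<Sum>u\<in>U. \<Sum>v\<in>U. (q u \<bullet> q v)\<^sup>2) =
    (\<Sum>i\<in>UNIV. \<Sum>j\<in>UNIV. (\<Sum>u\<in>U. q u $ i * q u $ j)\<^sup>2)"
proof -
  have "(\<Sum>u\<in>U. \<Sum>v\<in>U. (q u \<bullet> q v)\<^sup>2) =
      (\<Sum>u\<in>U. \<Sum>v\<in>U. \<Sum>i\<in>UNIV. \<Sum>j\<in>UNIV. (q u $ i * q u $ j) * (q v $ i * q v $ j))"
    by (simp add: inner_vec_def power2_eq_square sum_product mult_ac)
  also have "\<dots> = (\<Sum>i\<in>UNIV. \<Sum>j\<in>UNIV. \<Sum>u\<in>U. \<Sum>v\<in>U. (q u $ i * q u $ j) * (q v $ i * q v $ j))"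
    by (subst (1 2) sum.swap, subst sum.swap) (subst (2) sum.swap, simp)
  also have "\<dots> = (\<Sum>i\<in>UNIV. \<Sum>j\<in>UNIV. (\<Sum>u\<in>U. q u $ i * q u $ j)\<^sup>2)"
    by (simp add: power2_eq_square sum_product)
  finally show ?thesis .
qed

lemma card_squared_le_frame_potential:
  fixes q :: "'u \<Rightarrow> real ^ 't"
  assumes "\<forall>u\<in>U. norm (q u) = 1"
  shows "(real (card U))\<^sup>2 \<le> real CARD('t) * (\<Sum>u\<in>U. \<Sum>v\<in>U. (q u \<bullet> q v)\<^sup>2)"
proof -
  define M where "M i j = (\<Sum>u\<in>U. q u $ i * q u $ j)" for i j
  have trace_M: "(\<Sum>i\<in>UNIV. M i i) = real (card U)"
  proof -
    have "(\<Sum>i\<in>UNIV. M i i) = (\<Sum>u\<in>U. (norm (q u))\<^sup>2)"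
      unfolding M_def by (subst sum.swap) (simp add: power2_norm_eq_inner inner_vec_def)
    also have "\<dots> = real (card U)"
      using assms by simp
    finally show ?thesis .
  qed
  have "(real (card U))\<^sup>2 \<le> real CARD('t) * (\<Sum>i\<in>UNIV. (M i i)\<^sup>2)"
    using sum_squared_le_sum_of_squares[of "\<lambda>i. M i i" UNIV] trace_M by (simp add: mult.commute)
  also have "\<dots> \<le> real CARD('t) * (\<Sum>i\<in>UNIV. \<Sum>j\<in>UNIV. (M i j)\<^sup>2)"
    by (intro mult_left_mono sum_mono member_le_sum) auto
  also have "\<dots> = real CARD('t) * (\<Sum>u\<in>U. \<Sum>v\<in>U. (q u \<bullet> q v)\<^sup>2)"
    unfolding M_def frame_potential_eq_frobenius ..
  finally show ?thesis .
qed

lemma divide_add_divide_ge_two: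
  fixes x y :: real
  assumes "x > 0" and "y > 0"
  shows "2 \<le> x / y + y / x"
proof -
  have "2 * x * y \<le> x * x + y * y"
    using zero_le_power2[of "x - y"] by (simp add: power2_eq_square algebra_simps)
  with assms show ?thesis
    by (simp add: field_simps)
qed

lemma sum_sum_le_sum_sum_weighted:
  fixes c :: "'a \<Rightarrow> 'a \<Rightarrow> real" and w :: "'a \<Rightarrow> real"
  assumes sym: "\<And>u v. u \<in> U \<Longrightarrow> v \<in> U \<Longrightarrow> c u v = c v u"
    and nonneg: "\<And>u v. u \<in> U \<Longrightarrow> v \<in> U \<Longrightarrow> 0 \<le> c u v"
    and wpos: "\<And>u. u \<in> U \<Longrightarrow> 0 < w u"
  shows "(\<Sum>u\<in>U. \<Sum>v\<in>U. c u v) \<le> (\<Sum>u\<in>U. \<Sum>v\<in>U. c u v * (w v / w u))"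
    (is "?S \<le> ?A")
proof -
  have swapped: "?A = (\<Sum>u\<in>U. \<Sum>v\<in>U. c u v * (w u / w v))"
    by (subst sum.swap) (intro sum.cong refl, simp add: sym)
  have "2 * ?S = (\<Sum>u\<in>U. \<Sum>v\<in>U. c u v * 2)"
    by (simp add: sum_distrib_left mult_ac)
  also have "\<dots> \<le> (\<Sum>u\<in>U. \<Sum>v\<in>U. c u v * (w v / w u + w u / w v))"
    using nonneg wpos by (intro sum_mono mult_left_mono divide_add_divide_ge_two) auto
  also have "\<dots> = ?A + ?A"
    by (subst (2) swapped) (simp add: distrib_left sum.distrib)
  finally show ?thesis by simp
qed

lemma sinr_requirement_imp_interference_bound:
  fixes \<gamma> P \<delta> S :: real
  assumes "0 < \<gamma>" and "0 < P" and "0 < \<delta> * S - P"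
    and "\<gamma> \<le> P / (\<delta> * S - P)"
  shows "\<delta> * S / P \<le> (1 + \<gamma>) / \<gamma>"
proof -
  have "\<gamma> * (\<delta> * S - P) \<le> P"
    using assms(3,4) by (simp add: pos_le_divide_eq)
  then have "\<gamma> * (\<delta> * S) \<le> (1 + \<gamma>) * P"
    by (simp add: algebra_simps)
  with assms(1,2) show ?thesis
    by (simp add: divide_simps mult_ac)
qed

theorem mainTheorem2:
  fixes L K :: nat
    and q :: "nat \<times> nat \<Rightarrow> real ^ 't"
    and P \<delta> \<gamma> :: "nat \<times> nat \<Rightarrow> real"
  assumes "L > 0" and "K > 0"
    and unit: "\<forall>u\<in>users L K. norm (q u) = 1"
    and Ppos: "\<forall>u\<in>users L K. P u > 0"
    and dpos: "\<forall>u\<in>users L K. \<delta> u > 0"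
    and denpos: "\<forall>u\<in>users L K.
        \<delta> u * (\<Sum>v\<in>users L K. (rho q u v)\<^sup>2 * P v / \<delta> v) - P u > 0"
    and gpos: "\<forall>u\<in>users L K. \<gamma> u > 0"
    and req: "\<forall>u\<in>users L K. phibar L K q P \<delta> u \<ge> \<gamma> u"
  shows "real (K * L) \<le>
    sqrt (real CARD('t) * (\<Sum>i=1..L. \<Sum>j=1..K. (1 + \<gamma> (i, j)) / \<gamma> (i, j)))"
proof (rule real_le_rsqrt)
  define U where "U = users L K"
  define w where "w u = P u / \<delta> u" for u
  have card_U: "card U = K * L"
    by (simp add: U_def users_def card_cartesian_product)
  have per_user: "(\<Sum>v\<in>U. (rho q u v)\<^sup>2 * (w v / w u)) \<le> (1 + \<gamma> u) / \<gamma> u"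
    if "u \<in> U" for u
  proof -
    define S where "S = (\<Sum>v\<in>U. (rho q u v)\<^sup>2 * P v / \<delta> v)"
    have "(\<Sum>v\<in>U. (rho q u v)\<^sup>2 * (w v / w u)) = \<delta> u * S / P u"
      by (simp add: S_def w_def sum_divide_distrib sum_distrib_left mult_ac)
    also have "\<dots> \<le> (1 + \<gamma> u) / \<gamma> u"
      using that gpos Ppos denpos req
      by (intro sinr_requirement_imp_interference_bound) (auto simp: U_def S_def phibar_def)
    finally show ?thesis .
  qed
  have "(real (K * L))\<^sup>2 \<le> real CARD('t) * (\<Sum>u\<in>U. \<Sum>v\<in>U. (rho q u v)\<^sup>2)"
    using card_squared_le_frame_potential[of U q] unit card_U by (simp add: U_def rho_def)
  also have "\<dots> \<le> real CARD('t) * (\<Sum>u\<in>U. \<Sum>v\<in>U. (rho q u v)\<^sup>2 * (w v / w u))"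
    using Ppos dpos
    by (intro mult_left_mono sum_sum_le_sum_sum_weighted) (auto simp: U_def w_def rho_def inner_commute)
  also have "\<dots> \<le> real CARD('t) * (\<Sum>u\<in>U. (1 + \<gamma> u) / \<gamma> u)"
    by (intro mult_left_mono sum_mono per_user) auto
  finally show "(real (K * L))\<^sup>2 \<le> real CARD('t) * (\<Sum>i=1..L. \<Sum>j=1..K. (1 + \<gamma> (i, j)) / \<gamma> (i, j))"
    by (simp add: U_def users_def sum.cartesian_product)
qed

end
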